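(* If a non-failed Boolean CSP is limited and hyper-arc consistent, then it is closed under the applications of (each of) the rules of the proof system BOOL'.
   Context: A Boolean CSP is $\langle \mathcal C; x_1\in D_1,\dots,x_n\in D_n\rangle$ with $D_i\subseteq\{0,1\}$ and $\mathcal C$ a finite set of Boolean constraints, each of the forms $u=v$ ($\{(0,0),(1,1)\}$), $\neg u=v$ ($\{(0,1),(1,0)\}$), $u\wedge v=w$ ($\{(0,0,0),(0,1,0),(1,0,0),(1,1,1)\}$), $u\vee v=w$ ($\{(0,0,0),(0,1,1),(1,0,1),(1,1,1)\}$) on distinct variables; constraints are always understood as restricted to the current domains. $x=d$ means $x\in\{d\}$. A CSP is failed if some domain is empty. A constraint is solved if it equals the product of the domains of its variables; $\phi$ is a reformulation of $\psi$ if removing solved constraints from both yields the same CSP. A Boolean CSP is limited if it contains no constraint $x\wedge y=z$ whose variables have domains $x=1, y\in\{0,1\}, z\in\{0,1\}$ or $x\in\{0,1\}, y=1, z\in\{0,1\}$, and no constraint $x\vee y=z$ whose variables have domains $x=0, y\in\{0,1\}, z\in\{0,1\}$ or $x\in\{0,1\}, y=0, z\in\{0,1\}$. The proof system BOOL' consists of the rules (constraint, premise $\rightarrow$ conclusion; $x,y,z$ schematic): EQU1: $x=y$, $x=1\rightarrow y=1$; EQU2: $x=y$, $y=1\rightarrow x=1$; EQU3: $x=y$, $x=0\rightarrow y=0$; EQU4: $x=y$, $y=0\rightarrow x=0$; NOT1: $\neg x=y$, $x=1\rightarrow y=0$; NOT2: $\neg x=y$, $x=0\rightarrow y=1$; NOT3: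 $\neg x=y$, $y=1\rightarrow x=0$; NOT4: $\neg x=y$, $y=0\rightarrow x=1$; AND1': $x\wedge y=z$, $x=1\rightarrow$ constraint $y=z$; AND2': $x\wedge y=z$, $y=1\rightarrow$ constraint $x=z$; AND3': $x\wedge y=z$, $z=1\rightarrow x=1$; AND4: $x\wedge y=z$, $x=0\rightarrow z=0$; AND5: $x\wedge y=z$, $y=0\rightarrow z=0$; AND6': $x\wedge y=z$, $z=1\rightarrow y=1$; OR1: $x\vee y=z$, $x=1\rightarrow z=1$; OR2': $x\vee y=z$, $x=0\rightarrow$ constraint $y=z$; OR3': $x\vee y=z$, $y=0\rightarrow$ constraint $x=z$; OR4': $x\vee y=z$, $z=0\rightarrow x=0$; OR5: $x\vee y=z$, $y=1\rightarrow z=1$; OR6': $x\vee y=z$, $z=0\rightarrow y=0$. On CSPs: a rule with constraint $c$ and premise $X=s$ is applicable to a CSP containing (an instance of) $c$ in which each variable of $X$ has domain exactly $\{s_i\}$. If the conclusion is $Y=t$, the result removes $c$ and replaces the domain $D$ of each $y_j\in Y$ by $D\cap\{t_j\}$; if the conclusion is a constraint, the result replaces $c$ by that equality constraint (on the corresponding variables) and leaves domains unchanged. An application is relevant if its result is not a reformulation of the original CSP. A CSP is closed under the applications of a rule $R$ if $R$ cannot be applied or no application of it is relevant. A constraint is hyper-arc consistent if for every variable of it each value in its domain participates in a solution to the constraint (restricted to current domains); a CSP is hyper-arc consistent if every constraint of it is. *)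

theory Defs
  imports Main
begin

datatype 'v constr =
    CEq 'v 'v
  | CNot 'v 'v
  | CAnd 'v 'v 'v
  | COr 'v 'v 'v

fun cvars :: "'v constr \<Rightarrow> 'v set" where
  "cvars (CEq u v) = {u, v}"
| "cvars (CNot u v) = {u, v}"
| "cvars (CAnd u v w) = {u, v, w}"
| "cvars (COr u v w) = {u, v, w}"

fun wf_constr :: "'v constr \<Rightarrow> bool" where
  "wf_constr (CEq u v) = (u \<noteq> v)"
| "wf_constr (CNot u v) = (u \<noteq> v)"
| "wf_constr (CAnd u v w) = distinct [u, v, w]"
| "wf_constr (COr u v w) = distinct [u, v, w]"

fun sat :: "'v constr \<Rightarrow> ('v \<Rightarrow> bool) \<Rightarrow> bool" where
  "sat (CEq u v) a = (a u = a v)"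
| "sat (CNot u v) a = ((\<not> a u) = a v)"
| "sat (CAnd u v w) a = ((a u \<and> a v) = a w)"
| "sat (COr u v w) a = ((a u \<or> a v) = a w)"

text \<open>A CSP: a finite set of variables, a finite set of constraints, and domains
  (subsets of {0,1}, here of type bool set, False = 0, True = 1).\<close>
record 'v csp =
  vars :: "'v set"
  cons :: "'v constr set"
  doms :: "'v \<Rightarrow> bool set"

definition wf_csp :: "'v csp \<Rightarrow> bool" where
  "wf_csp P \<longleftrightarrow> finite (vars P) \<and> finite (cons P) \<and>
     (\<forall>c\<in>cons P. wf_constr c \<and> cvars c \<subseteq> vars P)"

definition failed :: "'v csp \<Rightarrow> bool" where
  "failed P \<longleftrightarrow> (\<exists>x\<in>vars P. doms P x = {})"

definition in_doms :: "('v \<Rightarrow> bool set) \<Rightarrow> 'v constr \<Rightarrow> ('v \<Rightarrow> bool) \<Rightarrow> bool" where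
  "in_doms D c a \<longleftrightarrow> (\<forall>x\<in>cvars c. a x \<in> D x)"

text \<open>A constraint is solved if (restricted to the domains) it equals the product of the domains.\<close>
definition solved :: "('v \<Rightarrow> bool set) \<Rightarrow> 'v constr \<Rightarrow> bool" where
  "solved D c \<longleftrightarrow> (\<forall>a. in_doms D c a \<longrightarrow> sat c a)"

definition unsolved_cons :: "'v csp \<Rightarrow> 'v constr set" where
  "unsolved_cons P = {c \<in> cons P. \<not> solved (doms P) c}"

definition reformulation :: "'v csp \<Rightarrow> 'v csp \<Rightarrow> bool" where
  "reformulation \<phi> \<psi> \<longleftrightarrow> vars \<phi> = vars \<psi> \<and> unsolved_cons \<phi> = unsolved_cons \<psi> \<and>
     (\<forall>x\<in>vars \<psi>. doms \<phi> x = doms \<psi> x)"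

definition hac_constr :: "('v \<Rightarrow> bool set) \<Rightarrow> 'v constr \<Rightarrow> bool" where
  "hac_constr D c \<longleftrightarrow>
     (\<forall>x\<in>cvars c. \<forall>d\<in>D x. \<exists>a. a x = d \<and> in_doms D c a \<and> sat c a)"

definition hac :: "'v csp \<Rightarrow> bool" where
  "hac P \<longleftrightarrow> (\<forall>c\<in>cons P. hac_constr (doms P) c)"

definition limited :: "'v csp \<Rightarrow> bool" where
  "limited P \<longleftrightarrow>
     (\<forall>x y z. CAnd x y z \<in> cons P \<longrightarrow>
        \<not> (doms P x = {True} \<and> doms P y = UNIV \<and> doms P z = UNIV) \<and>
        \<not> (doms P x = UNIV \<and> doms P y = {True} \<and> doms P z = UNIV)) \<and>
     (\<forall>x y z. COr x y z \<in> cons P \<longrightarrow>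
        \<not> (doms P x = {False} \<and> doms P y = UNIV \<and> doms P z = UNIV) \<and>
        \<not> (doms P x = UNIV \<and> doms P y = {False} \<and> doms P z = UNIV))"

datatype rule =
    EQU1 | EQU2 | EQU3 | EQU4
  | NOT1 | NOT2 | NOT3 | NOT4
  | AND1' | AND2' | AND3' | AND4 | AND5 | AND6'
  | OR1 | OR2' | OR3' | OR4' | OR5 | OR6'

datatype 'v concl = CDom 'v bool | CNewEq 'v 'v

text \<open>Instance of a rule on a constraint: premise (variable, value) and conclusion;
  None if the constraint is not of the rule's form.\<close>
fun rule_inst :: "rule \<Rightarrow> 'v constr \<Rightarrow> (('v \<times> bool) \<times> 'v concl) option" where
  "rule_inst EQU1 (CEq x y) = Some ((x, True), CDom y True)"
| "rule_inst EQU2 (CEq x y) = Some ((y, True), CDom x True)"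
| "rule_inst EQU3 (CEq x y) = Some ((x, False), CDom y False)"
| "rule_inst EQU4 (CEq x y) = Some ((y, False), CDom x False)"
| "rule_inst NOT1 (CNot x y) = Some ((x, True), CDom y False)"
| "rule_inst NOT2 (CNot x y) = Some ((x, False), CDom y True)"
| "rule_inst NOT3 (CNot x y) = Some ((y, True), CDom x False)"
| "rule_inst NOT4 (CNot x y) = Some ((y, False), CDom x True)"
| "rule_inst AND1' (CAnd x y z) = Some ((x, True), CNewEq y z)"
| "rule_inst AND2' (CAnd x y z) = Some ((y, True), CNewEq x z)"
| "rule_inst AND3' (CAnd x y z) = Some ((z, True), CDom x True)"
| "rule_inst AND4 (CAnd x y z) = Some ((x, False), CDom z False)"
| "rule_inst AND5 (CAnd x y z) = Some ((y, False), CDom z False)"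
| "rule_inst AND6' (CAnd x y z) = Some ((z, True), CDom y True)"
| "rule_inst OR1 (COr x y z) = Some ((x, True), CDom z True)"
| "rule_inst OR2' (COr x y z) = Some ((x, False), CNewEq y z)"
| "rule_inst OR3' (COr x y z) = Some ((y, False), CNewEq x z)"
| "rule_inst OR4' (COr x y z) = Some ((z, False), CDom x False)"
| "rule_inst OR5 (COr x y z) = Some ((y, True), CDom z True)"
| "rule_inst OR6' (COr x y z) = Some ((z, False), CDom y False)"
| "rule_inst _ _ = None"

definition applicable :: "rule \<Rightarrow> 'v constr \<Rightarrow> 'v csp \<Rightarrow> bool" where
  "applicable R c P \<longleftrightarrow> c \<in> cons P \<and>
     (\<exists>x s k. rule_inst R c = Some ((x, s), k) \<and> doms P x = {s})"

definition apply_rule :: "rule \<Rightarrow> 'v constr \<Rightarrow> 'v csp \<Rightarrow> 'v csp" where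
  "apply_rule R c P =
     (case rule_inst R c of
        Some (_, CDom y t) \<Rightarrow>
          P\<lparr>cons := cons P - {c}, doms := (doms P)(y := doms P y \<inter> {t})\<rparr>
      | Some (_, CNewEq y z) \<Rightarrow> P\<lparr>cons := insert (CEq y z) (cons P - {c})\<rparr>
      | None \<Rightarrow> P)"

definition relevant :: "rule \<Rightarrow> 'v constr \<Rightarrow> 'v csp \<Rightarrow> bool" where
  "relevant R c P \<longleftrightarrow> \<not> reformulation (apply_rule R c P) P"

definition closed_under :: "rule \<Rightarrow> 'v csp \<Rightarrow> bool" where
  "closed_under R P \<longleftrightarrow> (\<forall>c. applicable R c P \<longrightarrow> \<not> relevant R c P)"

end

theory Submission
  imports Defs
begin

text \<open>Suppose a rule fires on a constraint \<open>c\<close> because its premise variable \<open>x\<close> has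
  domain \<open>{s}\<close>. By hyper-arc consistency every value in the domain of a variable of \<open>c\<close>
  extends to a solution of \<open>c\<close>, which necessarily has \<open>x = s\<close> and hence satisfies the
  rule's conclusion. So the conclusion is already reflected in the domains: a domain
  restriction \<open>y = t\<close> changes nothing, and a new equality \<open>y = z\<close> has equal domains for
  \<open>y\<close> and \<open>z\<close>, which are singletons because limitedness forbids both being \<open>{0,1}\<close>.
  Then all variables of \<open>c\<close> but at most one are fixed, and a hyper-arc consistent
  constraint with at most one unfixed variable is solved. Hence the application only
  removes or adds solved constraints and yields a reformulation.\<close>

fun concl_vars :: "'v concl \<Rightarrow> 'v set" where
  "concl_vars (CDom y t) = {y}"
| "concl_vars (CNewEq y z) = {y, z}"

fun concl_sat :: "'v concl \<Rightarrow> ('v \<Rightarrow> bool) \<Rightarrow> bool" where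
  "concl_sat (CDom y t) a = (a y = t)"
| "concl_sat (CNewEq y z) a = (a y = a z)"

fun redundant_concl :: "('v \<Rightarrow> bool set) \<Rightarrow> 'v concl \<Rightarrow> bool" where
  "redundant_concl D (CDom y t) = (D y \<subseteq> {t})"
| "redundant_concl D (CNewEq y z) = solved D (CEq y z)"

lemma bool_set_singleton:
  fixes A :: "bool set"
  assumes "A \<noteq> {}" "A \<noteq> UNIV"
  shows "\<exists>s. A = {s}"
proof -
  obtain s where s: "s \<in> A" using assms(1) by blast
  have "(\<not> s) \<notin> A"
  proof
    assume "(\<not> s) \<in> A"
    with s have "t \<in> A" for t by (cases "t = s") auto
    with assms(2) show False by blast
  qed
  then have "t = s" if "t \<in> A" for t
    using that by (cases t; cases s) auto
  with s show ?thesis by blast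
qed

lemma sat_cong: "(\<And>x. x \<in> cvars c \<Longrightarrow> a x = b x) \<Longrightarrow> sat c a = sat c b"
  by (cases c) auto

lemma rule_inst_sound:
  assumes "rule_inst R c = Some ((x, s), k)" "sat c a" "a x = s"
  shows "concl_sat k a"
  using assms by (cases R; cases c) auto

text \<open>In the last claim \<open>w\<close> is the variable of \<open>c\<close> that occurs neither in the premise
  nor in the conclusion, when there is one.\<close>
lemma rule_inst_vars:
  assumes "rule_inst R c = Some ((x, s), k)"
  shows "x \<in> cvars c" "concl_vars k \<subseteq> cvars c"
    "\<exists>w\<in>cvars c. cvars c \<subseteq> insert x (insert w (concl_vars k))"
  using assms by (cases R; cases c; auto)+

lemma limited_new_eq_not_both_UNIV:
  assumes "limited P" "c \<in> cons P" "rule_inst R c = Some ((x, s), CNewEq y z)"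
    "doms P x = {s}"
  shows "doms P y \<noteq> UNIV \<or> doms P z \<noteq> UNIV"
  using assms by (cases R; cases c) (auto simp: limited_def)

lemma hac_constr_fixed_support:
  assumes "hac_constr D c" "x \<in> cvars c" "D x = {s}" "y \<in> cvars c" "d \<in> D y"
  obtains a where "a y = d" "a x = s" "in_doms D c a" "sat c a"
proof -
  from assms(1,4,5) obtain a where a: "a y = d" "in_doms D c a" "sat c a"
    unfolding hac_constr_def by blast
  with assms(2,3) have "a x = s" unfolding in_doms_def by auto
  with a that show thesis by blast
qed

lemma hac_constr_solved_if_fixed_except:
  assumes hac: "hac_constr D c" and "w \<in> cvars c"
    and fixed: "\<And>y. y \<in> cvars c - {w} \<Longrightarrow> \<exists>s. D y = {s}"
  shows "solved D c"
  unfolding solved_def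
proof (intro allI impI)
  fix a assume a: "in_doms D c a"
  with \<open>w \<in> cvars c\<close> hac obtain b where b: "b w = a w" "in_doms D c b" "sat c b"
    unfolding hac_constr_def in_doms_def by blast
  have "a y = b y" if "y \<in> cvars c" for y
  proof (cases "y = w")
    case False
    with fixed that obtain s where "D y = {s}" by blast
    with a b(2) that show ?thesis unfolding in_doms_def by blast
  qed (use b in simp)
  then show "sat c a" using sat_cong b(3) by metis
qed

lemma concl_redundant_and_fixed:
  assumes "limited P" "c \<in> cons P" and hac: "hac_constr (doms P) c"
    and nonempty: "\<And>y. y \<in> cvars c \<Longrightarrow> doms P y \<noteq> {}"
    and inst: "rule_inst R c = Some ((x, s), k)" and fixed: "doms P x = {s}"
  shows "redundant_concl (doms P) k \<and> (\<forall>y\<in>concl_vars k. \<exists>t. doms P y = {t})"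
proof -
  note vars = rule_inst_vars[OF inst]
  have supported: "\<exists>a. a y = d \<and> in_doms (doms P) c a \<and> concl_sat k a"
    if y: "y \<in> concl_vars k" and d: "d \<in> doms P y" for y d
  proof -
    from y vars(2) have "y \<in> cvars c" by blast
    then obtain a where "a y = d" "a x = s" "in_doms (doms P) c a" "sat c a"
      by (rule hac_constr_fixed_support[OF hac vars(1) fixed _ d])
    with rule_inst_sound[OF inst] show ?thesis by blast
  qed
  show ?thesis
  proof (cases k)
    case (CDom y t)
    with supported have "doms P y \<subseteq> {t}" by fastforce
    with nonempty vars CDom show ?thesis by auto
  next
    case (CNewEq y z)
    have "doms P u \<subseteq> doms P v" if "u \<in> {y, z}" "v \<in> {y, z}" for u v
    proof
      fix d assume "d \<in> doms P u"
      moreover from that CNewEq have "u \<in> concl_vars k" by auto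
      ultimately obtain a where "a u = d" "in_doms (doms P) c a" "concl_sat k a"
        using supported by blast
      with vars CNewEq that show "d \<in> doms P v" unfolding in_doms_def by auto
    qed
    then have same: "doms P y = doms P z" by blast
    with limited_new_eq_not_both_UNIV[OF assms(1,2) inst[unfolded CNewEq] fixed]
    have "doms P y \<noteq> UNIV" by simp
    moreover from nonempty vars(2) CNewEq have "doms P y \<noteq> {}" by simp
    ultimately obtain t where "doms P y = {t}"
      using bool_set_singleton by blast
    moreover from this same have "doms P z = {t}" by simp
    ultimately show ?thesis using CNewEq by (simp add: solved_def in_doms_def)
  qed
qed

lemma reformulation_change_solved_cons:
  assumes "\<And>c. c \<in> C - cons P \<Longrightarrow> solved (doms P) c"
    and "\<And>c. c \<in> cons P - C \<Longrightarrow> solved (doms P) c"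
  shows "reformulation (P\<lparr>cons := C\<rparr>) P"
  using assms unfolding reformulation_def unsolved_cons_def by auto

lemma not_relevant_if_redundant:
  assumes "rule_inst R c = Some ((x, s), k)" "solved (doms P) c"
    "redundant_concl (doms P) k"
  shows "\<not> relevant R c P"
proof (cases k)
  case (CDom y t)
  with assms have "apply_rule R c P = P\<lparr>cons := cons P - {c}\<rparr>"
    unfolding apply_rule_def by (simp add: Int_absorb2)
  then show ?thesis
    unfolding relevant_def using assms(2)
    by (auto intro: reformulation_change_solved_cons)
next
  case (CNewEq y z)
  with assms have "apply_rule R c P = P\<lparr>cons := insert (CEq y z) (cons P - {c})\<rparr>"
    unfolding apply_rule_def by simp
  then show ?thesis
    unfolding relevant_def using assms(2,3) CNewEq
    by (auto intro: reformulation_change_solved_cons)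
qed

theorem theorem6:
  fixes P :: "'v csp"
  assumes "wf_csp P"
    and "\<not> failed P"
    and "limited P"
    and "hac P"
  shows "\<forall>R. closed_under R P"
  unfolding closed_under_def
proof (intro allI impI)
  fix R c assume "applicable R c P"
  then obtain x s k where c: "c \<in> cons P" and inst: "rule_inst R c = Some ((x, s), k)"
    and fixed: "doms P x = {s}" unfolding applicable_def by blast
  have hac: "hac_constr (doms P) c" using assms(4) c unfolding hac_def by blast
  have nonempty: "doms P y \<noteq> {}" if "y \<in> cvars c" for y
    using assms(1,2) c that unfolding wf_csp_def failed_def by blast
  from concl_redundant_and_fixed[OF assms(3) c hac nonempty inst fixed]
  have redundant: "redundant_concl (doms P) k"
    and concl_fixed: "\<And>y. y \<in> concl_vars k \<Longrightarrow> \<exists>t. doms P y = {t}" by simp_all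
  obtain w where w: "w \<in> cvars c" and cover: "cvars c \<subseteq> insert x (insert w (concl_vars k))"
    using rule_inst_vars(3)[OF inst] by blast
  have "\<exists>t. doms P y = {t}" if "y \<in> cvars c - {w}" for y
    using that cover fixed concl_fixed by blast
  with hac w have "solved (doms P) c" by (rule hac_constr_solved_if_fixed_except)
  from inst this redundant show "\<not> relevant R c P" by (rule not_relevant_if_redundant)
qed

end
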